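(* Let $r\ge1$, $k_1,\dots,k_r\ge1$, $k=\sum k_\alpha$, and let $\Pi\in\mathrm{Part}_2(2k)$ satisfy $\#(\Pi_0\vee\Pi_1\vee\Pi)=1$ and $\#(\Pi_1\vee\Pi)=1$. Then $$\lim_{p\to\infty}\frac1p\sum_{\substack{\mathbf j:\ (p,2k)\text{-word},\\ \mathbf j\ \Pi_1\text{-measurable}}}C_\Pi(\mathbf j)=\sum_{\mathbf j\in\mathbb Z^{\Pi_1}/\mathbb Z^{\Pi_1\vee\Pi}}C_\Pi(\mathbf j),$$ the right-hand sum being well defined and absolutely convergent.
   Context: $\{Z_j\}_{j\in\mathbb Z}$ is a stationary real sequence with all moments finite, $\mathbf EZ_0=0$, and $\sum_{j_1,\dots,j_r\in\mathbb Z}|\mathbf C(Z_0,Z_{j_1},\dots,Z_{j_r})|<\infty$ for all $r\ge1$, where $\mathbf C$ is the joint cumulant $\mathbf C(X_1,\dots,X_k)=i^{-k}\frac{\partial^k}{\partial t_1\cdots\partial t_k}\log\mathbf E\exp(\sum_j it_jX_j)|_{t=0}$. $\mathrm{Part}(m)$ is the set of set partitions of $\{1,\dots,m\}$; $\mathrm{Part}_2(m)$ those with all parts of size $\ge2$; $\Pi\vee\Sigma$ is the finest partition refined by both. With $K_0=0$, $K_\alpha=2\sum_{\beta\le\alpha}k_\beta$: $\Pi_0=\{\{2i-1,2i\}:i=1,\dots,k\}$, $\Pi_1=\bigcup_{\alpha=1}^r\big(\{\{K_{\alpha-1}+2\nu,K_{\alpha-1}+2\nu+1\}:1\le\nu\le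 k_\alpha-1\}\cup\{\{K_\alpha,K_{\alpha-1}+1\}\}\big)$. A $(p,2k)$-word is a function $\mathbf j:\{1,\dots,2k\}\to\{1,\dots,p\}$, $\Pi$-measurable if constant on parts of $\Pi$. For $\mathbf j:\{1,\dots,2k\}\to\mathbb Z$, $C_\Pi(\mathbf j)=\prod_{A\in\Pi}\mathbf C(\{Z_{\mathbf j(i)}\}_{i\in A})$. $\mathbb Z^\Sigma$ denotes the group of functions $\{1,\dots,2k\}\to\mathbb Z$ constant on each part of $\Sigma$ (so $\mathbb Z^{\Pi_1\vee\Pi}\subset\mathbb Z^{\Pi_1}$), and $C_\Pi$ is constant on cosets of $\mathbb Z^{\Pi}\supset\mathbb Z^{\Pi_1\vee\Pi}$. *)

theory Defs
  imports "HOL-Probability.Probability"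
begin

definition Part :: "nat \<Rightarrow> nat set set set" where
  "Part m = {P. partition_on {1..m} P}"

definition Part2 :: "nat \<Rightarrow> nat set set set" where
  "Part2 m = {P \<in> Part m. \<forall>B\<in>P. 2 \<le> card B}"

definition same_block :: "'a set set \<Rightarrow> ('a \<times> 'a) set" where
  "same_block P = {(x, y). \<exists>B\<in>P. x \<in> B \<and> y \<in> B}"

definition pjoin :: "nat \<Rightarrow> nat set set \<Rightarrow> nat set set \<Rightarrow> nat set set" where
  "pjoin m P Q = {1..m} // ((same_block P \<union> same_block Q)\<^sup>*)"

definition Kidx :: "(nat \<Rightarrow> nat) \<Rightarrow> nat \<Rightarrow> nat" where
  "Kidx kk \<alpha> = 2 * (\<Sum>\<beta>\<in>{1..\<alpha>}. kk \<beta>)"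

definition Pi0 :: "nat \<Rightarrow> nat set set" where
  "Pi0 k = {{2*i - 1, 2*i} | i. 1 \<le> i \<and> i \<le> k}"

definition Pi1 :: "nat \<Rightarrow> (nat \<Rightarrow> nat) \<Rightarrow> nat set set" where
  "Pi1 r kk = (\<Union>\<alpha>\<in>{1..r}.
      {{Kidx kk (\<alpha> - 1) + 2*\<nu>, Kidx kk (\<alpha> - 1) + 2*\<nu> + 1} | \<nu>. 1 \<le> \<nu> \<and> \<nu> \<le> kk \<alpha> - 1}
      \<union> {{Kidx kk \<alpha>, Kidx kk (\<alpha> - 1) + 1}})"

(* joint cumulant of the family (X i)_{i \<in> A}, via the moment-cumulant formula
   C(X_A) = sum_{pi partition of A} (-1)^(|pi|-1) (|pi|-1)! prod_{B in pi} E[prod_{i in B} X_i] *)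
definition cumulant :: "'a measure \<Rightarrow> ('i \<Rightarrow> 'a \<Rightarrow> real) \<Rightarrow> 'i set \<Rightarrow> real" where
  "cumulant M X A =
     (\<Sum>P\<in>{P. partition_on A P}.
        (-1) ^ (card P - 1) * fact (card P - 1) *
        (\<Prod>B\<in>P. integral\<^sup>L M (\<lambda>\<omega>. \<Prod>i\<in>B. X i \<omega>)))"

definition CPi :: "'a measure \<Rightarrow> (int \<Rightarrow> 'a \<Rightarrow> real) \<Rightarrow> nat set set \<Rightarrow> (nat \<Rightarrow> int) \<Rightarrow> real" where
  "CPi M Z P j = (\<Prod>A\<in>P. cumulant M (\<lambda>i. Z (j i)) A)"

definition words :: "nat \<Rightarrow> nat \<Rightarrow> (nat \<Rightarrow> nat) set" where
  "words p m = {1..m} \<rightarrow>\<^sub>E {1..p}"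

definition measurable_wrt :: "'b set set \<Rightarrow> ('b \<Rightarrow> 'c) \<Rightarrow> bool" where
  "measurable_wrt P j \<longleftrightarrow> (\<forall>B\<in>P. \<forall>x\<in>B. \<forall>y\<in>B. j x = j y)"

definition ZSig :: "nat \<Rightarrow> nat set set \<Rightarrow> (nat \<Rightarrow> int) set" where
  "ZSig m S = {j. (\<forall>i. i \<notin> {1..m} \<longrightarrow> j i = 0) \<and> measurable_wrt S j}"

definition coset :: "(nat \<Rightarrow> int) set \<Rightarrow> (nat \<Rightarrow> int) \<Rightarrow> (nat \<Rightarrow> int) set" where
  "coset H j = {(\<lambda>i. j i + h i) | h. h \<in> H}"

definition quot :: "(nat \<Rightarrow> int) set \<Rightarrow> (nat \<Rightarrow> int) set \<Rightarrow> (nat \<Rightarrow> int) set set" where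
  "quot G H = coset H ` G"

definition stationary_seq :: "'a measure \<Rightarrow> (int \<Rightarrow> 'a \<Rightarrow> real) \<Rightarrow> bool" where
  "stationary_seq M Z \<longleftrightarrow>
     (\<forall>(n::nat) (t::nat \<Rightarrow> int) (s::int).
        distr M (PiM {..<n} (\<lambda>_. borel)) (\<lambda>\<omega>. \<lambda>i\<in>{..<n}. Z (t i + s) \<omega>)
      = distr M (PiM {..<n} (\<lambda>_. borel)) (\<lambda>\<omega>. \<lambda>i\<in>{..<n}. Z (t i) \<omega>))"

definition standing_assumptions :: "'a measure \<Rightarrow> (int \<Rightarrow> 'a \<Rightarrow> real) \<Rightarrow> bool" where
  "standing_assumptions M Z \<longleftrightarrow>
     prob_space M \<and>
     (\<forall>j. Z j \<in> borel_measurable M) \<and>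
     stationary_seq M Z \<and>
     (\<forall>j (n::nat). integrable M (\<lambda>\<omega>. Z j \<omega> ^ n)) \<and>
     integral\<^sup>L M (Z 0) = 0 \<and>
     (\<forall>r::nat. 1 \<le> r \<longrightarrow>
        ((\<lambda>js::nat \<Rightarrow> int. \<bar>cumulant M (\<lambda>i. Z (js i)) {0..r}\<bar>)
          summable_on {js. \<forall>i. i \<notin> {1..r} \<longrightarrow> js i = 0}))"

end

theory Submission
  imports Defs
begin

text \<open>Since \<open>\<Pi>\<^sub>1 \<or> \<Pi>\<close> has a single block, the lattice one divides by consists of the functions
  constant on \<open>{1..2k}\<close>, and every coset has exactly one representative \<open>g\<close> with \<open>g(1) = 0\<close>. By stationarity
  \<open>C\<^sub>\<Pi>\<close> is invariant under adding constants, so the average over \<open>\<Pi>\<^sub>1\<close>-measurable words is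
  \<open>\<Sum>\<^sub>g C\<^sub>\<Pi>(g) N\<^sub>p(g)/p\<close>, where \<open>N\<^sub>p(g) = p - O(\<Sum>|g|)\<close> counts the words of shape \<open>g\<close>; dominated
  convergence gives the limit once \<open>\<Sum>\<^sub>g |C\<^sub>\<Pi>(g)|\<close> is finite. For that, list the blocks of \<open>\<Pi>\<close> along a
  spanning tree of the graph linking them through \<open>\<Pi>\<^sub>1\<close>: each new block contains a point whose value
  is already fixed, so summing it out costs at most \<open>\<Sum>\<^sub>j |C(Z\<^sub>0, Z\<^sub>j\<^sub>1, \<dots>, Z\<^sub>j\<^sub>r)| < \<infinity>\<close>.\<close>

section \<open>Cumulants of a stationary sequence\<close>

lemma cumulant_cong:
  assumes "\<And>i. i \<in> A \<Longrightarrow> X i = Y i"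
  shows "cumulant M X A = cumulant M Y A"
  unfolding cumulant_def
proof (intro sum.cong refl arg_cong2[where f="(*)"] prod.cong Bochner_Integration.integral_cong)
  fix P B \<omega> i
  assume "P \<in> {P. partition_on A P}" "B \<in> P" "i \<in> B"
  then show "X i \<omega> = Y i \<omega>"
    using assms partition_onD1 by (metis UnionI mem_Collect_eq)
qed

lemma partition_on_image:
  assumes "partition_on C Q" "inj_on f C"
  shows "partition_on (f ` C) ((`) f ` Q)"
proof -
  have "(`) f ` Q - {{}} = (`) f ` Q"
    using partition_onD3[OF assms(1)] by auto
  then show ?thesis
    using partition_on_inj_image[OF assms] by simp
qed

lemma partition_on_image_image_cancel:
  assumes "partition_on C Q" "\<And>x. x \<in> C \<Longrightarrow> g (f x) = x"
  shows "(`) g ` (`) f ` Q = Q"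
proof -
  have "g ` f ` b = b" if "b \<in> Q" for b
  proof -
    have "b \<subseteq> C"
      using that assms(1) by (auto dest: partition_onD1)
    then have "(\<lambda>x. g (f x)) ` b = (\<lambda>x. x) ` b"
      using assms(2) by (intro image_cong) auto
    then show ?thesis by (simp add: image_image)
  qed
  then show ?thesis by (simp add: image_image)
qed

lemma bij_betw_partition_on_image:
  assumes "bij_betw \<sigma> B A"
  shows "bij_betw ((`) ((`) \<sigma>)) {Q. partition_on B Q} {P. partition_on A P}"
proof (rule bij_betw_byWitness[where f'="(`) ((`) (inv_into B \<sigma>))"])
  have \<tau>: "bij_betw (inv_into B \<sigma>) A B"
    by (rule bij_betw_inv_into[OF assms])
  show "\<forall>Q\<in>{Q. partition_on B Q}. (`) ((`) (inv_into B \<sigma>)) ((`) ((`) \<sigma>) Q) = Q"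
    using partition_on_image_image_cancel bij_betw_inv_into_left[OF assms] by blast
  show "\<forall>P\<in>{P. partition_on A P}. (`) ((`) \<sigma>) ((`) ((`) (inv_into B \<sigma>)) P) = P"
    using partition_on_image_image_cancel bij_betw_inv_into_right[OF assms] by blast
  show "(`) ((`) \<sigma>) ` {Q. partition_on B Q} \<subseteq> {P. partition_on A P}"
    using partition_on_image[of B _ \<sigma>] assms unfolding bij_betw_def by blast
  show "(`) ((`) (inv_into B \<sigma>)) ` {P. partition_on A P} \<subseteq> {Q. partition_on B Q}"
    using partition_on_image[of A _ "inv_into B \<sigma>"] \<tau> unfolding bij_betw_def
    by (metis (no_types, lifting) image_subsetI mem_Collect_eq)
qed

lemma cumulant_reindex:
  assumes "bij_betw \<sigma> B A"
  shows "cumulant M X A = cumulant M (\<lambda>i. X (\<sigma> i)) B"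
proof -
  have moment: "integral\<^sup>L M (\<lambda>\<omega>. \<Prod>i\<in>\<sigma> ` b. X i \<omega>) = integral\<^sup>L M (\<lambda>\<omega>. \<Prod>i\<in>b. X (\<sigma> i) \<omega>)"
    if "b \<subseteq> B" for b
    using inj_on_subset[OF bij_betw_imp_inj_on[OF assms] that] by (simp add: prod.reindex)
  have blocks: "inj_on ((`) \<sigma>) Q" if "partition_on B Q" for Q
    using that by (intro inj_on_subset[OF inj_on_image_Pow[OF bij_betw_imp_inj_on[OF assms]]])
      (auto dest: partition_onD1)
  show ?thesis
    unfolding cumulant_def
  proof (rule sum.reindex_bij_betw[OF bij_betw_partition_on_image[OF assms], symmetric, THEN trans],
         intro sum.cong refl)
    fix Q assume "Q \<in> {Q. partition_on B Q}"
    then have Q: "partition_on B Q" by simp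
    have "(\<Prod>b\<in>(`) \<sigma> ` Q. integral\<^sup>L M (\<lambda>\<omega>. \<Prod>i\<in>b. X i \<omega>))
        = (\<Prod>b\<in>Q. integral\<^sup>L M (\<lambda>\<omega>. \<Prod>i\<in>\<sigma> ` b. X i \<omega>))"
      by (simp add: prod.reindex[OF blocks[OF Q]])
    also have "\<dots> = (\<Prod>b\<in>Q. integral\<^sup>L M (\<lambda>\<omega>. \<Prod>i\<in>b. X (\<sigma> i) \<omega>))"
      using Q by (intro prod.cong refl moment) (auto dest: partition_onD1)
    finally have "(\<Prod>b\<in>(`) \<sigma> ` Q. integral\<^sup>L M (\<lambda>\<omega>. \<Prod>i\<in>b. X i \<omega>))
        = (\<Prod>b\<in>Q. integral\<^sup>L M (\<lambda>\<omega>. \<Prod>i\<in>b. X (\<sigma> i) \<omega>))" .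
    then show "(-1) ^ (card ((`) \<sigma> ` Q) - 1) * fact (card ((`) \<sigma> ` Q) - 1) *
          (\<Prod>b\<in>(`) \<sigma> ` Q. integral\<^sup>L M (\<lambda>\<omega>. \<Prod>i\<in>b. X i \<omega>)) =
          (-1) ^ (card Q - 1) * fact (card Q - 1) * (\<Prod>b\<in>Q. integral\<^sup>L M (\<lambda>\<omega>. \<Prod>i\<in>b. X (\<sigma> i) \<omega>))"
      by (simp add: card_image[OF blocks[OF Q]])
  qed
qed

lemma stationary_moment_shift:
  assumes "stationary_seq M Z" "\<And>j. Z j \<in> borel_measurable M" "finite B"
  shows "integral\<^sup>L M (\<lambda>\<omega>. \<Prod>i\<in>B. Z (g i + s) \<omega>) = integral\<^sup>L M (\<lambda>\<omega>. \<Prod>i\<in>B. Z (g i) \<omega>)"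
proof -
  obtain \<tau> where \<tau>: "bij_betw \<tau> {..<card B} B"
    using ex_bij_betw_nat_finite[OF assms(3)] by (auto simp: atLeast0LessThan)
  define F where "F = (\<lambda>x::nat \<Rightarrow> real. \<Prod>i<card B. x i)"
  have F: "F \<in> borel_measurable (PiM {..<card B} (\<lambda>_. borel))"
    unfolding F_def by measurable
  have moment_as_distr: "integral\<^sup>L M (\<lambda>\<omega>. \<Prod>i\<in>B. Z (g i + u) \<omega>)
      = integral\<^sup>L (distr M (PiM {..<card B} (\<lambda>_. borel))
          (\<lambda>\<omega>. \<lambda>i\<in>{..<card B}. Z (g (\<tau> i) + u) \<omega>)) F" for u
  proof -
    have "(\<lambda>\<omega>. \<lambda>i\<in>{..<card B}. Z (g (\<tau> i) + u) \<omega>) \<in> M \<rightarrow>\<^sub>M PiM {..<card B} (\<lambda>_. borel)"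
      by (intro measurable_restrict assms(2))
    then have "integral\<^sup>L (distr M (PiM {..<card B} (\<lambda>_. borel))
          (\<lambda>\<omega>. \<lambda>i\<in>{..<card B}. Z (g (\<tau> i) + u) \<omega>)) F
        = integral\<^sup>L M (\<lambda>\<omega>. F (\<lambda>i\<in>{..<card B}. Z (g (\<tau> i) + u) \<omega>))"
      by (rule integral_distr[OF _ F])
    moreover have "(\<Prod>i\<in>B. Z (g i + u) \<omega>) = F (\<lambda>i\<in>{..<card B}. Z (g (\<tau> i) + u) \<omega>)" for \<omega>
      using prod.reindex_bij_betw[OF \<tau>, of "\<lambda>i. Z (g i + u) \<omega>"] by (simp add: F_def)
    ultimately show ?thesis
      by simp
  qed
  have "distr M (PiM {..<card B} (\<lambda>_. borel)) (\<lambda>\<omega>. \<lambda>i\<in>{..<card B}. Z (g (\<tau> i) + s) \<omega>)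
      = distr M (PiM {..<card B} (\<lambda>_. borel)) (\<lambda>\<omega>. \<lambda>i\<in>{..<card B}. Z (g (\<tau> i)) \<omega>)"
    using assms(1) unfolding stationary_seq_def
    by (elim allE[where x="card B"] allE[where x="\<lambda>i. g (\<tau> i)"] allE[where x=s])
  then show ?thesis
    using moment_as_distr[of s] moment_as_distr[of 0] by simp
qed

lemma cumulant_shift:
  assumes "stationary_seq M Z" "\<And>j. Z j \<in> borel_measurable M" "finite A"
  shows "cumulant M (\<lambda>i. Z (g i + s)) A = cumulant M (\<lambda>i. Z (g i)) A"
  unfolding cumulant_def
proof (intro sum.cong refl arg_cong2[where f="(*)"] prod.cong)
  fix P B assume "P \<in> {P. partition_on A P}" "B \<in> P"
  then have "finite B"
    using assms(3) by (auto dest: partition_onD1 intro: finite_subset)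
  then show "integral\<^sup>L M (\<lambda>\<omega>. \<Prod>i\<in>B. Z (g i + s) \<omega>) = integral\<^sup>L M (\<lambda>\<omega>. \<Prod>i\<in>B. Z (g i) \<omega>)"
    by (rule stationary_moment_shift[OF assms(1,2)])
qed

definition shift_invariant_on :: "'i set \<Rightarrow> (('i \<Rightarrow> int) \<Rightarrow> 'a) \<Rightarrow> bool" where
  "shift_invariant_on E f \<longleftrightarrow> (\<forall>j j' s. (\<forall>i\<in>E. j' i = j i + s) \<longrightarrow> f j' = f j)"

lemma shift_invariant_onD:
  "shift_invariant_on E f \<Longrightarrow> (\<And>i. i \<in> E \<Longrightarrow> j' i = j i + s) \<Longrightarrow> f j' = f j"
  unfolding shift_invariant_on_def by blast

lemma shift_invariant_on_CPi:
  assumes "stationary_seq M Z" "\<And>j. Z j \<in> borel_measurable M" "partition_on E P" "finite E"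
  shows "shift_invariant_on E (CPi M Z P)"
  unfolding shift_invariant_on_def
proof (intro allI impI)
  fix j j' :: "nat \<Rightarrow> int" and s assume shift: "\<forall>i\<in>E. j' i = j i + s"
  show "CPi M Z P j' = CPi M Z P j"
    unfolding CPi_def
  proof (rule prod.cong[OF refl])
    fix A assume "A \<in> P"
    then have "A \<subseteq> E"
      using assms(3) by (auto dest: partition_onD1)
    then have "cumulant M (\<lambda>i. Z (j' i)) A = cumulant M (\<lambda>i. Z (j i + s)) A"
      using shift by (intro cumulant_cong) auto
    also have "\<dots> = cumulant M (\<lambda>i. Z (j i)) A"
      using \<open>A \<subseteq> E\<close> assms(4) by (intro cumulant_shift[OF assms(1,2)]) (rule finite_subset)
    finally show "cumulant M (\<lambda>i. Z (j' i)) A = cumulant M (\<lambda>i. Z (j i)) A" .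
  qed
qed

lemma bij_betw_atLeastAtMost_pointed:
  assumes "finite A" "card A = Suc r" "a \<in> A"
  obtains \<sigma> where "bij_betw \<sigma> {0..r} A" "\<sigma> 0 = a"
proof -
  obtain h where "bij_betw h {1..r} (A - {a})"
    using ex_bij_betw_nat_finite_1[of "A - {a}"] assms by auto
  then have "bij_betw (h(0 := a)) {1..r} (A - {a})"
    by (rule bij_betw_cong[THEN iffD1, rotated]) auto
  then have "bij_betw (h(0 := a)) ({1..r} \<union> {0}) ((A - {a}) \<union> {a})"
    using notIn_Un_bij_betw[of 0 "{1..r}" "h(0 := a)" "A - {a}"] by simp
  moreover have "{1..r} \<union> {0} = {0..r}" "(A - {a}) \<union> {a} = A"
    using assms(3) by auto
  ultimately show ?thesis
    using that[of "h(0 := a)"] by simp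
qed

text \<open>The summability hypothesis on \<open>Z\<close> only controls cumulants of families \<open>Z\<^sub>0, Z\<^sub>j\<^sub>1, \<dots>\<close> whose
  first index is \<open>0\<close>; stationarity moves an arbitrary pinned index of a block there.\<close>

definition cumulant_bound :: "'a measure \<Rightarrow> (int \<Rightarrow> 'a \<Rightarrow> real) \<Rightarrow> nat \<Rightarrow> real" where
  "cumulant_bound M Z r =
     (\<Sum>\<^sub>\<infinity>js\<in>{js. \<forall>i. i \<notin> {1..r} \<longrightarrow> js i = 0}. \<bar>cumulant M (\<lambda>i. Z (js i)) {0..r}\<bar>)"

lemma sum_abs_cumulant_pinned_le:
  assumes "stationary_seq M Z" "\<And>j. Z j \<in> borel_measurable M"
    and summable: "(\<lambda>js. \<bar>cumulant M (\<lambda>i. Z (js i)) {0..r}\<bar>) summable_on {js. \<forall>i. i \<notin> {1..r} \<longrightarrow> js i = 0}"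
    and "finite A" "card A = Suc r" "a \<in> A"
    and "finite F" "\<And>g. g \<in> F \<Longrightarrow> g a = s" "inj_on (\<lambda>g. restrict g A) F"
  shows "(\<Sum>g\<in>F. \<bar>cumulant M (\<lambda>i. Z (g i)) A\<bar>) \<le> cumulant_bound M Z r"
proof -
  obtain \<sigma> where \<sigma>: "bij_betw \<sigma> {0..r} A" "\<sigma> 0 = a"
    using assms(4-6) by (rule bij_betw_atLeastAtMost_pointed)
  define \<phi> where "\<phi> g = (\<lambda>i. if i \<in> {1..r} then g (\<sigma> i) - s else 0)" for g
  have cumulant_\<phi>: "cumulant M (\<lambda>i. Z (g i)) A = cumulant M (\<lambda>i. Z (\<phi> g i)) {0..r}" if "g \<in> F" for g
  proof -
    have "cumulant M (\<lambda>i. Z (g i)) A = cumulant M (\<lambda>i. Z (g i + - s)) A"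
      by (rule cumulant_shift[OF assms(1,2,4), symmetric])
    also have "\<dots> = cumulant M (\<lambda>i. Z (g (\<sigma> i) + - s)) {0..r}"
      by (rule cumulant_reindex[OF \<sigma>(1)])
    also have "\<dots> = cumulant M (\<lambda>i. Z (\<phi> g i)) {0..r}"
      using assms(8)[OF that] \<sigma>(2) by (intro cumulant_cong) (auto simp: \<phi>_def Suc_le_eq)
    finally show ?thesis .
  qed
  have "inj_on \<phi> F"
  proof (rule inj_onI)
    fix g1 g2 assume g: "g1 \<in> F" "g2 \<in> F" "\<phi> g1 = \<phi> g2"
    have "g1 (\<sigma> i) = g2 (\<sigma> i)" if "i \<in> {0..r}" for i
      using fun_cong[OF g(3), of i] assms(8)[OF g(1)] assms(8)[OF g(2)] \<sigma>(2) that
      by (cases "i = 0") (auto simp: \<phi>_def)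
    then have "restrict g1 A = restrict g2 A"
      using \<sigma>(1) by (auto simp: bij_betw_def restrict_def fun_eq_iff)
    then show "g1 = g2"
      using assms(9) g(1,2) by (auto dest: inj_onD)
  qed
  then have "(\<Sum>g\<in>F. \<bar>cumulant M (\<lambda>i. Z (g i)) A\<bar>) = (\<Sum>js\<in>\<phi> ` F. \<bar>cumulant M (\<lambda>i. Z (js i)) {0..r}\<bar>)"
    by (simp add: sum.reindex cumulant_\<phi>)
  also have "\<dots> \<le> cumulant_bound M Z r"
    unfolding cumulant_bound_def
    by (rule finite_sum_le_infsum[OF summable]) (auto simp: \<phi>_def assms(7))
  finally show ?thesis .
qed

section \<open>Summing products of cumulants along a spanning tree\<close>

abbreviation block_closure :: "'i set set \<Rightarrow> 'i set \<Rightarrow> 'i set" where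
  "block_closure Q X \<equiv> (same_block Q)\<^sup>* `` X"

definition pinned_fns :: "'i set set \<Rightarrow> 'i \<Rightarrow> 'i set \<Rightarrow> ('i \<Rightarrow> int) set" where
  "pinned_fns Q e S = {g. (\<forall>i. i \<notin> S \<longrightarrow> g i = 0) \<and> measurable_wrt Q g \<and> g e = 0}"

lemma measurable_wrt_rtrancl_eq:
  assumes "(x, y) \<in> (same_block Q)\<^sup>*" "measurable_wrt Q g" "measurable_wrt Q g'" "g x = g' x"
  shows "g y = g' y"
  using assms(1)
proof (induction rule: rtrancl_induct)
  case base
  show ?case by (fact assms(4))
next
  case (step y z)
  then obtain B where "B \<in> Q" "y \<in> B" "z \<in> B"
    by (auto simp: same_block_def)
  then show ?case
    using step.IH assms(2,3) unfolding measurable_wrt_def by metis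
qed

lemma pinned_fns_eqI:
  assumes "g \<in> pinned_fns Q e (block_closure Q X)" "g' \<in> pinned_fns Q e (block_closure Q X)"
    and "\<And>x. x \<in> X \<Longrightarrow> g x = g' x"
  shows "g = g'"
proof
  fix i
  show "g i = g' i"
  proof (cases "i \<in> block_closure Q X")
    case True
    then obtain x where "x \<in> X" "(x, i) \<in> (same_block Q)\<^sup>*"
      by blast
    moreover have "measurable_wrt Q g" "measurable_wrt Q g'"
      using assms(1,2) by (simp_all add: pinned_fns_def)
    ultimately show ?thesis
      using assms(3) measurable_wrt_rtrancl_eq by metis
  next
    case False
    then show ?thesis
      using assms(1,2) by (simp add: pinned_fns_def)
  qed
qed

lemma pinned_fns_restrict:
  assumes "g \<in> pinned_fns Q e T" "e \<in> X"
  shows "(\<lambda>i. if i \<in> block_closure Q X then g i else 0) \<in> pinned_fns Q e (block_closure Q X)"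
proof -
  have closed: "y \<in> block_closure Q X" if "x \<in> block_closure Q X" "(x, y) \<in> same_block Q" for x y
    using that by (meson Image_iff rtrancl.rtrancl_into_rtrancl)
  have "measurable_wrt Q (\<lambda>i. if i \<in> block_closure Q X then g i else 0)"
    unfolding measurable_wrt_def
  proof (intro ballI)
    fix B x y assume "B \<in> Q" "x \<in> B" "y \<in> B"
    then have "x \<in> block_closure Q X \<longleftrightarrow> y \<in> block_closure Q X"
      using closed[of x y] closed[of y x] by (auto simp: same_block_def)
    moreover have "g x = g y"
      using assms(1) \<open>B \<in> Q\<close> \<open>x \<in> B\<close> \<open>y \<in> B\<close> unfolding pinned_fns_def measurable_wrt_def by blast
    ultimately show "(if x \<in> block_closure Q X then g x else 0) = (if y \<in> block_closure Q X then g y else 0)"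
      by simp
  qed
  moreover have "e \<in> block_closure Q X"
    using assms(2) by blast
  ultimately show ?thesis
    using assms(1) unfolding pinned_fns_def by simp
qed

lemma sum_mult_fibres_le:
  fixes b :: "'a \<Rightarrow> real" and a :: "'b \<Rightarrow> real"
  assumes "finite F" "\<And>h. (\<Sum>g\<in>{g\<in>F. \<rho> g = h}. b g) \<le> L" "\<And>h. 0 \<le> a h"
    and "(\<Sum>h\<in>\<rho> ` F. a h) \<le> B" "0 \<le> L"
  shows "(\<Sum>g\<in>F. b g * a (\<rho> g)) \<le> B * L"
proof -
  have "(\<Sum>g\<in>F. b g * a (\<rho> g)) = (\<Sum>h\<in>\<rho> ` F. \<Sum>g\<in>{g\<in>F. \<rho> g = h}. b g * a (\<rho> g))"
    by (rule sum.image_gen[OF assms(1)])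
  also have "\<dots> = (\<Sum>h\<in>\<rho> ` F. a h * (\<Sum>g\<in>{g\<in>F. \<rho> g = h}. b g))"
    by (simp add: sum_distrib_left mult.commute)
  also have "\<dots> \<le> (\<Sum>h\<in>\<rho> ` F. a h * L)"
    by (intro sum_mono mult_left_mono assms(2,3))
  also have "\<dots> \<le> B * L"
    using mult_right_mono[OF assms(4,5)] by (simp add: sum_distrib_right)
  finally show ?thesis .
qed

inductive chained :: "'i set set \<Rightarrow> 'i \<Rightarrow> 'i set set \<Rightarrow> bool" for Q e where
  chained_empty: "chained Q e {}"
| chained_insert: "chained Q e \<A> \<Longrightarrow> A \<notin> \<A> \<Longrightarrow> A \<inter> block_closure Q (insert e (\<Union>\<A>)) \<noteq> {}
    \<Longrightarrow> chained Q e (insert A \<A>)"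

lemma chained_finite: "chained Q e \<A> \<Longrightarrow> finite \<A>"
  by (induction rule: chained.induct) simp_all

lemma pinned_fns_closure_singleton: "pinned_fns Q e (block_closure Q {e}) = {\<lambda>_. 0}"
proof (intro equalityI subsetI)
  fix g assume g: "g \<in> pinned_fns Q e (block_closure Q {e})"
  moreover have "(\<lambda>_. 0) \<in> pinned_fns Q e (block_closure Q {e})"
    by (simp add: pinned_fns_def measurable_wrt_def)
  ultimately have "g = (\<lambda>_. 0)"
    by (rule pinned_fns_eqI) (use g in \<open>simp add: pinned_fns_def\<close>)
  then show "g \<in> {\<lambda>_. 0}"
    by simp
qed (simp add: pinned_fns_def measurable_wrt_def)

lemma inj_on_restrict_fibre:
  assumes "F \<subseteq> pinned_fns Q e (block_closure Q (X \<union> A))"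
  shows "inj_on (\<lambda>g. restrict g A) {g \<in> F. (\<lambda>i. if i \<in> block_closure Q X then g i else 0) = h}"
proof (rule inj_onI)
  fix g1 g2 assume g: "g1 \<in> {g \<in> F. (\<lambda>i. if i \<in> block_closure Q X then g i else 0) = h}"
    "g2 \<in> {g \<in> F. (\<lambda>i. if i \<in> block_closure Q X then g i else 0) = h}"
    and restrict_eq: "restrict g1 A = restrict g2 A"
  from g have outside_eq:
    "(\<lambda>i. if i \<in> block_closure Q X then g1 i else 0) = (\<lambda>i. if i \<in> block_closure Q X then g2 i else 0)"
    by (simp only: mem_Collect_eq)
  have "g1 x = g2 x" if "x \<in> X \<union> A" for x
  proof (cases "x \<in> A")
    case True
    then show ?thesis
      using fun_cong[OF restrict_eq, of x] by simp
  next
    case False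
    then have "x \<in> block_closure Q X"
      using that by blast
    then show ?thesis
      using fun_cong[OF outside_eq, of x] by simp
  qed
  then show "g1 = g2"
    using g assms by (intro pinned_fns_eqI[of g1 Q e _ g2]) auto
qed

text \<open>Summing fibre by fibre over the restriction to the old closure, the values on the new block
  \<open>A\<close> are pinned at a point of that closure, so they cost one factor \<open>L\<close>.\<close>

lemma sum_prod_insert_block_le:
  fixes c :: "'i set \<Rightarrow> ('i \<Rightarrow> int) \<Rightarrow> real"
  assumes "A \<in> P" "\<A> \<subseteq> P"
    and local: "\<And>B g g'. B \<in> P \<Longrightarrow> (\<And>i. i \<in> B \<Longrightarrow> g i = g' i) \<Longrightarrow> c B g = c B g'"
    and block_bound: "\<And>B a F s. B \<in> P \<Longrightarrow> a \<in> B \<Longrightarrow> finite F \<Longrightarrow> (\<And>g. g \<in> F \<Longrightarrow> g a = s)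
        \<Longrightarrow> inj_on (\<lambda>g. restrict g B) F \<Longrightarrow> (\<Sum>g\<in>F. \<bar>c B g\<bar>) \<le> L"
    and "0 \<le> L" "finite \<A>" "A \<notin> \<A>" "A \<inter> block_closure Q (insert e (\<Union>\<A>)) \<noteq> {}"
    and IH: "\<And>F. finite F \<Longrightarrow> F \<subseteq> pinned_fns Q e (block_closure Q (insert e (\<Union>\<A>)))
        \<Longrightarrow> (\<Sum>g\<in>F. \<Prod>B\<in>\<A>. \<bar>c B g\<bar>) \<le> L ^ card \<A>"
    and "finite F" "F \<subseteq> pinned_fns Q e (block_closure Q (insert e (\<Union>\<A>) \<union> A))"
  shows "(\<Sum>g\<in>F. \<Prod>B\<in>insert A \<A>. \<bar>c B g\<bar>) \<le> L ^ card (insert A \<A>)"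
proof -
  define S where "S = block_closure Q (insert e (\<Union>\<A>))"
  define \<rho> where "\<rho> g = (\<lambda>i. if i \<in> S then g i else 0)" for g :: "'i \<Rightarrow> int"
  obtain a where a: "a \<in> A" "a \<in> S"
    using assms(8) by (auto simp: S_def)
  have fibre: "(\<Sum>g\<in>{g\<in>F. \<rho> g = h}. \<bar>c A g\<bar>) \<le> L" for h
  proof (rule block_bound[OF assms(1) a(1)])
    show "finite {g \<in> F. \<rho> g = h}"
      using assms(10) by simp
    show "g a = h a" if "g \<in> {g \<in> F. \<rho> g = h}" for g
      using that a(2) by (auto simp: \<rho>_def)
    show "inj_on (\<lambda>g. restrict g A) {g \<in> F. \<rho> g = h}"
      unfolding \<rho>_def S_def by (rule inj_on_restrict_fibre[OF assms(11)])
  qed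
  have "\<rho> g \<in> pinned_fns Q e S" if "g \<in> F" for g
    using that assms(11) unfolding \<rho>_def S_def by (intro pinned_fns_restrict) auto
  then have old_blocks: "(\<Sum>h\<in>\<rho> ` F. \<Prod>B\<in>\<A>. \<bar>c B h\<bar>) \<le> L ^ card \<A>"
    using assms(10) by (intro IH) (auto simp: S_def)
  have "\<bar>c B g\<bar> = \<bar>c B (\<rho> g)\<bar>" if "B \<in> \<A>" for B g
  proof -
    have "g i = \<rho> g i" if "i \<in> B" for i
      using \<open>B \<in> \<A>\<close> that by (auto simp: \<rho>_def S_def)
    then show ?thesis
      using local[OF subsetD[OF assms(2) that]] by metis
  qed
  then have old_blocks_restrict: "(\<Prod>B\<in>\<A>. \<bar>c B g\<bar>) = (\<Prod>B\<in>\<A>. \<bar>c B (\<rho> g)\<bar>)" for g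
    by (rule prod.cong[OF refl])
  have "(\<Prod>B\<in>insert A \<A>. \<bar>c B g\<bar>) = \<bar>c A g\<bar> * (\<Prod>B\<in>\<A>. \<bar>c B (\<rho> g)\<bar>)" for g
    using assms(6,7) old_blocks_restrict[of g] by simp
  then have "(\<Sum>g\<in>F. \<Prod>B\<in>insert A \<A>. \<bar>c B g\<bar>) = (\<Sum>g\<in>F. \<bar>c A g\<bar> * (\<Prod>B\<in>\<A>. \<bar>c B (\<rho> g)\<bar>))"
    by (rule sum.cong[OF refl])
  also have "\<dots> \<le> L ^ card \<A> * L"
    by (rule sum_mult_fibres_le[OF assms(10) fibre _ old_blocks assms(5)]) (simp add: prod_nonneg)
  also have "\<dots> = L ^ card (insert A \<A>)"
    using assms(6,7) by simp
  finally show ?thesis .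
qed

lemma chained_sum_prod_le:
  fixes c :: "'i set \<Rightarrow> ('i \<Rightarrow> int) \<Rightarrow> real"
  assumes "chained Q e \<A>" "\<A> \<subseteq> P"
    and local: "\<And>A g g'. A \<in> P \<Longrightarrow> (\<And>i. i \<in> A \<Longrightarrow> g i = g' i) \<Longrightarrow> c A g = c A g'"
    and block_bound: "\<And>A a F s. A \<in> P \<Longrightarrow> a \<in> A \<Longrightarrow> finite F \<Longrightarrow> (\<And>g. g \<in> F \<Longrightarrow> g a = s)
        \<Longrightarrow> inj_on (\<lambda>g. restrict g A) F \<Longrightarrow> (\<Sum>g\<in>F. \<bar>c A g\<bar>) \<le> L"
    and "0 \<le> L" "finite F" "F \<subseteq> pinned_fns Q e (block_closure Q (insert e (\<Union>\<A>)))"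
  shows "(\<Sum>g\<in>F. \<Prod>A\<in>\<A>. \<bar>c A g\<bar>) \<le> L ^ card \<A>"
  using assms(1,2,6,7)
proof (induction arbitrary: F rule: chained.induct)
  case chained_empty
  then have "card F \<le> 1"
    using card_mono[of "{\<lambda>_. 0}" F] by (simp add: pinned_fns_closure_singleton)
  then show ?case
    by simp
next
  case (chained_insert \<A> A F)
  have "A \<in> P" "\<A> \<subseteq> P"
    using chained_insert.prems(1) by auto
  show ?case
  proof (rule sum_prod_insert_block_le[OF \<open>A \<in> P\<close> \<open>\<A> \<subseteq> P\<close> local block_bound \<open>0 \<le> L\<close>])
    show "finite \<A>"
      by (rule chained_finite[OF chained_insert.hyps(1)])
    show "A \<notin> \<A>" "A \<inter> block_closure Q (insert e (\<Union>\<A>)) \<noteq> {}"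
      by (fact chained_insert.hyps(2,3))+
    show "(\<Sum>g\<in>F'. \<Prod>B\<in>\<A>. \<bar>c B g\<bar>) \<le> L ^ card \<A>"
      if "finite F'" "F' \<subseteq> pinned_fns Q e (block_closure Q (insert e (\<Union>\<A>)))" for F'
      using \<open>\<A> \<subseteq> P\<close> that by (rule chained_insert.IH)
    show "finite F"
      by (rule chained_insert.prems(2))
    have "insert e (\<Union>(insert A \<A>)) = insert e (\<Union>\<A>) \<union> A"
      by auto
    then show "F \<subseteq> pinned_fns Q e (block_closure Q (insert e (\<Union>\<A>) \<union> A))"
      using chained_insert.prems(3) by simp
  qed
qed

lemma reachable_in_block_closure:
  assumes "\<And>A. A \<in> P \<Longrightarrow> A \<notin> \<A> \<Longrightarrow> A \<inter> block_closure Q (insert e (\<Union>\<A>)) = {}"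
    and "(e, y) \<in> (same_block P \<union> same_block Q)\<^sup>*"
  shows "y \<in> block_closure Q (insert e (\<Union>\<A>))"
  using assms(2)
proof (induction rule: rtrancl_induct)
  case base
  show ?case
    by (rule ImageI[OF rtrancl_refl insertI1])
next
  case (step x y)
  from step.hyps(2) show ?case
  proof
    assume "(x, y) \<in> same_block P"
    then obtain B where B: "B \<in> P" "x \<in> B" "y \<in> B"
      by (auto simp: same_block_def)
    show ?case
    proof (cases "B \<in> \<A>")
      case True
      then have "y \<in> insert e (\<Union>\<A>)"
        using B(3) by blast
      then show ?thesis
        by (rule ImageI[OF rtrancl_refl])
    next
      case False
      then have "B \<inter> block_closure Q (insert e (\<Union>\<A>)) \<noteq> {}"
        using B(2) step.IH by blast
      then show ?thesis
        using assms(1)[OF B(1) False] by contradiction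
    qed
  next
    assume "(x, y) \<in> same_block Q"
    then show ?case
      using step.IH by (meson Image_iff rtrancl.rtrancl_into_rtrancl)
  qed
qed

lemma chained_extend:
  assumes "partition_on E P" "E \<subseteq> (same_block P \<union> same_block Q)\<^sup>* `` {e}" "\<A> \<subset> P"
  shows "\<exists>A\<in>P - \<A>. A \<inter> block_closure Q (insert e (\<Union>\<A>)) \<noteq> {}"
proof (rule ccontr)
  assume "\<not> ?thesis"
  then have none: "A \<inter> block_closure Q (insert e (\<Union>\<A>)) = {}" if "A \<in> P" "A \<notin> \<A>" for A
    using that by simp
  obtain A where A: "A \<in> P" "A \<notin> \<A>"
    using assms(3) by blast
  then obtain y where "y \<in> A"
    using partition_onD3[OF assms(1)] by (metis ex_in_conv)
  moreover have "y \<in> E"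
    using partition_onD1[OF assms(1)] A(1) \<open>y \<in> A\<close> by blast
  then have "y \<in> block_closure Q (insert e (\<Union>\<A>))"
    using assms(2) reachable_in_block_closure[OF none] by blast
  ultimately show False
    using none[OF A] by blast
qed

lemma chained_partition:
  assumes "partition_on E P" "finite P" "E \<subseteq> (same_block P \<union> same_block Q)\<^sup>* `` {e}"
  shows "chained Q e P"
proof -
  have "chained Q e P" if "chained Q e \<A>" "\<A> \<subseteq> P" "card (P - \<A>) = n" for n \<A>
    using that
  proof (induction n arbitrary: \<A>)
    case 0
    then have "P - \<A> = {}"
      using assms(2) by simp
    then have "\<A> = P"
      using "0.prems"(2) by blast
    then show ?case
      using "0.prems"(1) by simp
  next
    case (Suc n)
    then have "P - \<A> \<noteq> {}"
      by fastforce
    then have "\<A> \<subset> P"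
      using Suc.prems(2) by blast
    then have "\<exists>A\<in>P - \<A>. A \<inter> block_closure Q (insert e (\<Union>\<A>)) \<noteq> {}"
      by (rule chained_extend[OF assms(1,3)])
    then obtain A where A: "A \<in> P" "A \<notin> \<A>" "A \<inter> block_closure Q (insert e (\<Union>\<A>)) \<noteq> {}"
      by auto
    show ?case
    proof (rule Suc.IH)
      show "chained Q e (insert A \<A>)"
        using Suc.prems(1) A(2,3) by (rule chained_insert)
      show "insert A \<A> \<subseteq> P"
        using A(1) Suc.prems(2) by blast
      have "P - insert A \<A> = (P - \<A>) - {A}"
        by blast
      then show "card (P - insert A \<A>) = n"
        using Suc.prems(3) A(1,2) by (simp add: card_Diff_singleton)
    qed
  qed
  from this[OF chained_empty _ refl] show ?thesis
    by simp
qed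

lemma pinned_fns_mono: "S \<subseteq> T \<Longrightarrow> pinned_fns Q e S \<subseteq> pinned_fns Q e T"
  unfolding pinned_fns_def by blast

lemma sum_abs_cumulant_block_le:
  assumes "standing_assumptions M Z" "finite E" "A \<subseteq> E" "2 \<le> card A"
    and "a \<in> A" "finite F" "\<And>g. g \<in> F \<Longrightarrow> g a = s" "inj_on (\<lambda>g. restrict g A) F"
  shows "(\<Sum>g\<in>F. \<bar>cumulant M (\<lambda>i. Z (g i)) A\<bar>) \<le> (\<Sum>r\<in>{1..card E}. cumulant_bound M Z r)"
proof -
  note SA = assms(1)[unfolded standing_assumptions_def]
  have "finite A" "card A \<le> card E"
    using assms(2,3) by (auto intro: finite_subset card_mono)
  moreover have "card A = Suc (card A - 1)" "1 \<le> card A - 1"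
    using assms(4) by auto
  ultimately have "(\<Sum>g\<in>F. \<bar>cumulant M (\<lambda>i. Z (g i)) A\<bar>) \<le> cumulant_bound M Z (card A - 1)"
    using SA assms(5-8) by (intro sum_abs_cumulant_pinned_le[where s=s]) auto
  also have "\<dots> \<le> (\<Sum>r\<in>{1..card E}. cumulant_bound M Z r)"
    using \<open>card A \<le> card E\<close> \<open>1 \<le> card A - 1\<close>
    by (intro member_le_sum) (auto simp: cumulant_bound_def intro: infsum_nonneg)
  finally show ?thesis .
qed

lemma CPi_abs_summable_on_pinned:
  assumes "standing_assumptions M Z"
    and "finite E" "partition_on E P" "\<And>B. B \<in> P \<Longrightarrow> 2 \<le> card B"
    and "E \<subseteq> (same_block P \<union> same_block Q)\<^sup>* `` {e}"
  shows "(\<lambda>g. \<bar>CPi M Z P g\<bar>) summable_on pinned_fns Q e E"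
proof -
  define L where "L = (\<Sum>r\<in>{1..card E}. cumulant_bound M Z r)"
  have "0 \<le> L"
    unfolding L_def cumulant_bound_def by (intro sum_nonneg infsum_nonneg) simp
  have block_bound: "(\<Sum>g\<in>F. \<bar>cumulant M (\<lambda>i. Z (g i)) A\<bar>) \<le> L"
    if "A \<in> P" "a \<in> A" "finite F" "\<And>g. g \<in> F \<Longrightarrow> g a = s" "inj_on (\<lambda>g. restrict g A) F"
    for A a F s
    unfolding L_def using assms(1,2) partition_onD1[OF assms(3)] assms(4)[OF that(1)] that
    by (intro sum_abs_cumulant_block_le) auto
  have "chained Q e P"
    using assms(3) finite_elements[OF assms(2,3)] assms(5) by (rule chained_partition)
  have "(\<Sum>g\<in>F. \<bar>CPi M Z P g\<bar>) \<le> L ^ card P" if "finite F" "F \<subseteq> pinned_fns Q e E" for F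
  proof -
    have E: "E \<subseteq> block_closure Q (insert e (\<Union>P))"
      using partition_onD1[OF assms(3)] by blast
    have "F \<subseteq> pinned_fns Q e (block_closure Q (insert e (\<Union>P)))"
      using that(2) pinned_fns_mono[OF E] by (rule order_trans)
    then have "(\<Sum>g\<in>F. \<Prod>A\<in>P. \<bar>cumulant M (\<lambda>i. Z (g i)) A\<bar>) \<le> L ^ card P"
      by (intro chained_sum_prod_le[OF \<open>chained Q e P\<close> order_refl _ block_bound \<open>0 \<le> L\<close> that(1)]
          cumulant_cong) simp
    then show ?thesis
      by (simp add: CPi_def abs_prod)
  qed
  then show ?thesis
    by (intro nonneg_bdd_above_summable_on bdd_aboveI[of _ "L ^ card P"]) auto
qed

section \<open>Counting words\<close>

definition normalize_word :: "nat \<Rightarrow> (nat \<Rightarrow> nat) \<Rightarrow> nat \<Rightarrow> int" where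
  "normalize_word m j = (\<lambda>i. if i \<in> {1..m} then int (j i) - int (j 1) else 0)"

definition word_count :: "nat set set \<Rightarrow> nat \<Rightarrow> nat \<Rightarrow> (nat \<Rightarrow> int) \<Rightarrow> nat" where
  "word_count Q m p g = card {j \<in> words p m. measurable_wrt Q j \<and> normalize_word m j = g}"

lemma finite_words: "finite (words p m)"
  unfolding words_def by (simp add: finite_PiE)

lemma normalize_word_pinned:
  assumes "1 \<le> m" "\<And>B. B \<in> Q \<Longrightarrow> B \<subseteq> {1..m}" "measurable_wrt Q j"
  shows "normalize_word m j \<in> pinned_fns Q 1 {1..m}"
proof -
  have "measurable_wrt Q (normalize_word m j)"
    unfolding measurable_wrt_def
  proof (intro ballI)
    fix B x y assume "B \<in> Q" "x \<in> B" "y \<in> B"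
    then have "x \<in> {1..m}" "y \<in> {1..m}" "j x = j y"
      using assms(2,3) unfolding measurable_wrt_def by blast+
    then show "normalize_word m j x = normalize_word m j y"
      by (simp add: normalize_word_def)
  qed
  then show ?thesis
    using assms(1) by (simp add: pinned_fns_def normalize_word_def)
qed

lemma word_count_le:
  assumes "1 \<le> m"
  shows "word_count Q m p g \<le> p"
proof -
  let ?W = "{j \<in> words p m. measurable_wrt Q j \<and> normalize_word m j = g}"
  have "inj_on (\<lambda>j. j 1) ?W"
  proof (rule inj_onI)
    fix j j' assume j: "j \<in> ?W" "j' \<in> ?W" "j 1 = j' 1"
    show "j = j'"
    proof
      fix i
      show "j i = j' i"
      proof (cases "i \<in> {1..m}")
        case True
        have "normalize_word m j i = normalize_word m j' i"
          using j(1,2) by simp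
        then show ?thesis
          using True j(3) by (simp add: normalize_word_def)
      next
        case False
        have "j \<in> {1..m} \<rightarrow>\<^sub>E {1..p}" "j' \<in> {1..m} \<rightarrow>\<^sub>E {1..p}"
          using j(1,2) by (simp_all add: words_def)
        then show ?thesis
          using PiE_arb[OF _ False] by metis
      qed
    qed
  qed
  moreover have "(\<lambda>j. j 1) ` ?W \<subseteq> {1..p}"
    using assms by (auto simp: words_def)
  ultimately have "card ?W \<le> card {1..p}"
    by (intro card_inj_on_le) auto
  then show ?thesis
    by (simp add: word_count_def)
qed

lemma translated_word_in_fibre:
  assumes "\<And>B. B \<in> Q \<Longrightarrow> B \<subseteq> {1..m}" "g \<in> pinned_fns Q 1 {1..m}"
    and range: "\<And>i. i \<in> {1..m} \<Longrightarrow> 1 \<le> g i + int t \<and> g i + int t \<le> int p"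
  shows "restrict (\<lambda>i. nat (g i + int t)) {1..m}
    \<in> {j \<in> words p m. measurable_wrt Q j \<and> normalize_word m j = g}"
proof -
  let ?j = "restrict (\<lambda>i. nat (g i + int t)) {1..m}"
  have g: "\<And>i. i \<notin> {1..m} \<Longrightarrow> g i = 0" "measurable_wrt Q g" "g 1 = 0"
    using assms(2) by (simp_all add: pinned_fns_def)
  have "?j \<in> words p m"
    unfolding words_def
  proof (rule restrict_PiE_iff[THEN iffD2], intro ballI)
    fix i assume "i \<in> {1..m}"
    then show "nat (g i + int t) \<in> {1..p}"
      using range[of i] by auto
  qed
  moreover have "measurable_wrt Q ?j"
    unfolding measurable_wrt_def
  proof (intro ballI)
    fix B x y assume "B \<in> Q" "x \<in> B" "y \<in> B"
    then have "x \<in> {1..m}" "y \<in> {1..m}" "g x = g y"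
      using assms(1) g(2) unfolding measurable_wrt_def by blast+
    then show "?j x = ?j y"
      by simp
  qed
  moreover have "normalize_word m ?j = g"
  proof
    fix i
    show "normalize_word m ?j i = g i"
      using range[of i] range[of 1] g(1)[of i] g(3)
      by (cases "i \<in> {1..m}") (simp_all add: normalize_word_def)
  qed
  ultimately show ?thesis
    by simp
qed

lemma word_count_ge:
  assumes "1 \<le> m" "\<And>B. B \<in> Q \<Longrightarrow> B \<subseteq> {1..m}" "g \<in> pinned_fns Q 1 {1..m}"
  shows "real p - 2 * (\<Sum>i\<in>{1..m}. \<bar>g i\<bar>) \<le> real (word_count Q m p g)"
proof -
  define N where "N = nat (\<Sum>i\<in>{1..m}. \<bar>g i\<bar>)"
  have N: "int N = (\<Sum>i\<in>{1..m}. \<bar>g i\<bar>)"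
    unfolding N_def by (simp add: sum_nonneg)
  define J where "J t = restrict (\<lambda>i. nat (g i + int t)) {1..m}" for t :: nat
  have "J t \<in> {j \<in> words p m. measurable_wrt Q j \<and> normalize_word m j = g}" if "t \<in> {N+1..p-N}" for t
    unfolding J_def using assms(2,3)
  proof (rule translated_word_in_fibre)
    show "1 \<le> g i + int t \<and> g i + int t \<le> int p" if "i \<in> {1..m}" for i
      using member_le_sum[of i "{1..m}" "\<lambda>i. \<bar>g i\<bar>"] that \<open>t \<in> {N+1..p-N}\<close> N by auto
  qed
  moreover have "inj_on J {N+1..p-N}"
  proof (rule inj_onI)
    fix t t' assume "J t = J t'"
    then have "J t 1 = J t' 1"
      by simp
    then show "t = t'"
      using assms(1,3) by (simp add: J_def pinned_fns_def)
  qed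
  ultimately have "card {N+1..p-N} \<le> word_count Q m p g"
    unfolding word_count_def using finite_words by (intro card_inj_on_le) auto
  moreover have "real p - 2 * real N \<le> real (card {N+1..p-N})"
    by simp
  ultimately show ?thesis
    using N by linarith
qed

lemma sum_words_normalize:
  fixes f :: "(nat \<Rightarrow> int) \<Rightarrow> real"
  assumes "shift_invariant_on {1..m} f"
  shows "(\<Sum>j\<in>{j \<in> words p m. measurable_wrt Q j}. f (\<lambda>i. int (j i)))
    = (\<Sum>g\<in>normalize_word m ` {j \<in> words p m. measurable_wrt Q j}. f g * real (word_count Q m p g))"
proof -
  let ?W = "{j \<in> words p m. measurable_wrt Q j}"
  have "f (\<lambda>i. int (j i)) = f (normalize_word m j)" for j
    by (rule shift_invariant_onD[OF assms, where s="int (j 1)"]) (simp add: normalize_word_def)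
  then have "(\<Sum>j\<in>?W. f (\<lambda>i. int (j i))) = (\<Sum>j\<in>?W. f (normalize_word m j))"
    by simp
  also have "\<dots> = (\<Sum>g\<in>normalize_word m ` ?W. \<Sum>j\<in>{j \<in> ?W. normalize_word m j = g}. f (normalize_word m j))"
    by (rule sum.image_gen) (simp add: finite_words)
  also have "\<dots> = (\<Sum>g\<in>normalize_word m ` ?W. f g * real (word_count Q m p g))"
    by (intro sum.cong refl) (simp add: word_count_def conj_assoc)
  finally show ?thesis .
qed

lemma infsum_weighted_tendsto:
  fixes f :: "'a \<Rightarrow> real" and w :: "nat \<Rightarrow> 'a \<Rightarrow> real"
  assumes "(\<lambda>x. \<bar>f x\<bar>) summable_on A"
    and "\<And>p x. x \<in> A \<Longrightarrow> \<bar>w p x\<bar> \<le> 1" "\<And>x. x \<in> A \<Longrightarrow> (\<lambda>p. w p x) \<longlonglongrightarrow> 1"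
  shows "(\<lambda>p. \<Sum>\<^sub>\<infinity>x\<in>A. f x * w p x) \<longlonglongrightarrow> (\<Sum>\<^sub>\<infinity>x\<in>A. f x)"
proof -
  have integrable: "integrable (count_space A) g" if "(\<lambda>x. \<bar>g x\<bar>) summable_on A" for g :: "'a \<Rightarrow> real"
  proof -
    have "(\<lambda>x. norm (g x)) summable_on A"
      using that by simp
    then have "Infinite_Set_Sum.abs_summable_on g A"
      using abs_summable_equivalent by blast
    then show ?thesis
      by (simp add: Infinite_Set_Sum.abs_summable_on_def)
  qed
  have integral: "integral\<^sup>L (count_space A) g = (\<Sum>\<^sub>\<infinity>x\<in>A. g x)" if "integrable (count_space A) g"
    for g :: "'a \<Rightarrow> real"
    using that infsetsum_infsum[of g A] by (simp add: infsetsum_def Infinite_Set_Sum.abs_summable_on_def)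
  have f: "integrable (count_space A) f" "integrable (count_space A) (\<lambda>x. \<bar>f x\<bar>)"
    using assms(1) by (auto intro: integrable)
  have "(\<lambda>p. f x * w p x) \<longlonglongrightarrow> f x" if "x \<in> A" for x
    using tendsto_mult[OF tendsto_const assms(3)[OF that]] by simp
  then have lim: "AE x in count_space A. (\<lambda>p. f x * w p x) \<longlonglongrightarrow> f x"
    by (intro AE_I2) simp
  have bound: "AE x in count_space A. norm (f x * w p x) \<le> \<bar>f x\<bar>" for p
    using assms(2) by (auto intro!: AE_I2 simp: abs_mult mult_left_le)
  have "integrable (count_space A) (\<lambda>x. f x * w p x)" for p
    by (rule integrable_dominated_convergence2[OF _ _ f(2) lim bound]) simp_all
  moreover have "(\<lambda>p. integral\<^sup>L (count_space A) (\<lambda>x. f x * w p x)) \<longlonglongrightarrow> integral\<^sup>L (count_space A) f"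
    by (rule integral_dominated_convergence[OF _ _ f(2) lim bound]) simp_all
  ultimately show ?thesis
    using integral f(1) by simp
qed

lemma word_count_ratio_tendsto:
  assumes "1 \<le> m" "\<And>B. B \<in> Q \<Longrightarrow> B \<subseteq> {1..m}" "g \<in> pinned_fns Q 1 {1..m}"
  shows "(\<lambda>p. real (word_count Q m p g) / real p) \<longlonglongrightarrow> 1"
proof (rule tendsto_sandwich)
  define c where "c = 2 * real_of_int (\<Sum>i\<in>{1..m}. \<bar>g i\<bar>)"
  show "(\<lambda>p. 1 - c / real p) \<longlonglongrightarrow> 1"
    using tendsto_diff[OF tendsto_const lim_const_over_n[of c], of 1] by simp
  show "\<forall>\<^sub>F p in sequentially. 1 - c / real p \<le> real (word_count Q m p g) / real p"
  proof (rule eventually_sequentiallyI[of 1])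
    fix p :: nat assume "1 \<le> p"
    then have "1 - c / real p = (real p - c) / real p"
      by (simp add: field_simps)
    also have "\<dots> \<le> real (word_count Q m p g) / real p"
      using word_count_ge[OF assms, of p] by (simp add: c_def divide_right_mono)
    finally show "1 - c / real p \<le> real (word_count Q m p g) / real p" .
  qed
  show "\<forall>\<^sub>F p in sequentially. real (word_count Q m p g) / real p \<le> 1"
    using word_count_le[OF assms(1), of Q _ g] by (intro always_eventually allI) (auto simp: divide_le_eq_1)
qed (rule tendsto_const)

lemma average_over_words_eq_infsum:
  fixes f :: "(nat \<Rightarrow> int) \<Rightarrow> real"
  assumes "1 \<le> m" "\<And>B. B \<in> Q \<Longrightarrow> B \<subseteq> {1..m}"
    and "shift_invariant_on {1..m} f"
  shows "(1 / real p) * (\<Sum>j\<in>{j \<in> words p m. measurable_wrt Q j}. f (\<lambda>i. int (j i)))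
    = (\<Sum>\<^sub>\<infinity>g\<in>pinned_fns Q 1 {1..m}. f g * (real (word_count Q m p g) / real p))"
proof -
  let ?N = "normalize_word m ` {j \<in> words p m. measurable_wrt Q j}"
  have "?N \<subseteq> pinned_fns Q 1 {1..m}"
    using normalize_word_pinned[OF assms(1,2)] by blast
  moreover have "word_count Q m p g = 0" if "g \<notin> ?N" for g
  proof -
    have no_words: "{j \<in> words p m. measurable_wrt Q j \<and> normalize_word m j = g} = {}"
      using that by blast
    show ?thesis
      unfolding word_count_def no_words by simp
  qed
  ultimately have "(\<Sum>\<^sub>\<infinity>g\<in>pinned_fns Q 1 {1..m}. f g * (real (word_count Q m p g) / real p))
      = (\<Sum>\<^sub>\<infinity>g\<in>?N. f g * (real (word_count Q m p g) / real p))"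
    by (intro infsum_cong_neutral) auto
  also have "\<dots> = (1 / real p) * (\<Sum>g\<in>?N. f g * real (word_count Q m p g))"
    by (simp add: finite_words sum_distrib_left)
  also have "\<dots> = (1 / real p) * (\<Sum>j\<in>{j \<in> words p m. measurable_wrt Q j}. f (\<lambda>i. int (j i)))"
    using sum_words_normalize[OF assms(3)] by simp
  finally show ?thesis ..
qed

lemma average_over_words_tendsto:
  fixes f :: "(nat \<Rightarrow> int) \<Rightarrow> real"
  assumes "1 \<le> m" "\<And>B. B \<in> Q \<Longrightarrow> B \<subseteq> {1..m}"
    and "shift_invariant_on {1..m} f"
    and "(\<lambda>g. \<bar>f g\<bar>) summable_on pinned_fns Q 1 {1..m}"
  shows "(\<lambda>p. (1 / real p) * (\<Sum>j\<in>{j \<in> words p m. measurable_wrt Q j}. f (\<lambda>i. int (j i))))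
    \<longlonglongrightarrow> (\<Sum>\<^sub>\<infinity>g\<in>pinned_fns Q 1 {1..m}. f g)"
proof -
  have "\<bar>real (word_count Q m p g) / real p\<bar> \<le> 1" for p g
    using word_count_le[OF assms(1), of Q p g] by (auto simp: divide_le_eq_1)
  then have "(\<lambda>p. \<Sum>\<^sub>\<infinity>g\<in>pinned_fns Q 1 {1..m}. f g * (real (word_count Q m p g) / real p))
      \<longlonglongrightarrow> (\<Sum>\<^sub>\<infinity>g\<in>pinned_fns Q 1 {1..m}. f g)"
    by (intro infsum_weighted_tendsto assms(4) word_count_ratio_tendsto[OF assms(1,2)])
  moreover have "(1 / real p) * (\<Sum>j\<in>{j \<in> words p m. measurable_wrt Q j}. f (\<lambda>i. int (j i)))
      = (\<Sum>\<^sub>\<infinity>g\<in>pinned_fns Q 1 {1..m}. f g * (real (word_count Q m p g) / real p))" for p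
    by (rule average_over_words_eq_infsum[OF assms(1-3)])
  ultimately show ?thesis
    by simp
qed

section \<open>Cosets of the constant functions\<close>

lemma ZSig_add: "h \<in> ZSig m S \<Longrightarrow> d \<in> ZSig m S \<Longrightarrow> (\<lambda>i. h i + d i) \<in> ZSig m S"
  unfolding ZSig_def measurable_wrt_def by (smt (verit) mem_Collect_eq)

lemma ZSig_diff: "h \<in> ZSig m S \<Longrightarrow> d \<in> ZSig m S \<Longrightarrow> (\<lambda>i. h i - d i) \<in> ZSig m S"
  unfolding ZSig_def measurable_wrt_def by (smt (verit) mem_Collect_eq)

lemma zero_in_ZSig: "(\<lambda>_. 0) \<in> ZSig m S"
  unfolding ZSig_def measurable_wrt_def by simp

lemma cosetI: "h \<in> H \<Longrightarrow> x = (\<lambda>i. j i + h i) \<Longrightarrow> x \<in> coset H j"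
  unfolding coset_def by blast

lemma cosetE:
  assumes "x \<in> coset H j"
  obtains h where "h \<in> H" "x = (\<lambda>i. j i + h i)"
  using assms unfolding coset_def by blast

lemma self_in_coset_ZSig: "j \<in> coset (ZSig m S) j"
  by (rule cosetI[OF zero_in_ZSig]) simp

lemma coset_ZSig_eq:
  assumes "d \<in> ZSig m S" "\<And>i. j' i = j i + d i"
  shows "coset (ZSig m S) j' = coset (ZSig m S) j"
proof (intro equalityI subsetI)
  fix x assume "x \<in> coset (ZSig m S) j'"
  then obtain h where h: "h \<in> ZSig m S" "x = (\<lambda>i. j' i + h i)"
    by (rule cosetE)
  show "x \<in> coset (ZSig m S) j"
  proof (rule cosetI)
    show "(\<lambda>i. d i + h i) \<in> ZSig m S"
      by (rule ZSig_add[OF assms(1) h(1)])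
    show "x = (\<lambda>i. j i + (d i + h i))"
      using h(2) assms(2) by (simp add: algebra_simps)
  qed
next
  fix x assume "x \<in> coset (ZSig m S) j"
  then obtain h where h: "h \<in> ZSig m S" "x = (\<lambda>i. j i + h i)"
    by (rule cosetE)
  show "x \<in> coset (ZSig m S) j'"
  proof (rule cosetI)
    show "(\<lambda>i. h i - d i) \<in> ZSig m S"
      by (rule ZSig_diff[OF h(1) assms(1)])
    show "x = (\<lambda>i. j' i + (h i - d i))"
      using h(2) assms(2) by (simp add: algebra_simps)
  qed
qed

lemma coset_single_block_shift:
  assumes "j \<in> coset (ZSig m {{1..m}}) j0" "j' \<in> coset (ZSig m {{1..m}}) j0"
  shows "\<exists>s. \<forall>i\<in>{1..m}. j' i = j i + s"
proof -
  obtain h h' where h: "h \<in> ZSig m {{1..m}}" "h' \<in> ZSig m {{1..m}}"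
    and j: "j = (\<lambda>i. j0 i + h i)" "j' = (\<lambda>i. j0 i + h' i)"
    using assms unfolding coset_def by blast
  have "j' i = j i + (h' 1 - h 1)" if "i \<in> {1..m}" for i
  proof -
    have "1 \<in> {1..m}"
      using that by simp
    then have "h i = h 1" "h' i = h' 1"
      using h that unfolding ZSig_def measurable_wrt_def by blast+
    then show ?thesis
      unfolding j by simp
  qed
  then show ?thesis
    by blast
qed

lemma quot_ZSig_single_block:
  assumes "1 \<le> m" "\<And>B. B \<in> Q \<Longrightarrow> B \<subseteq> {1..m}"
  shows "quot (ZSig m Q) (ZSig m {{1..m}}) = coset (ZSig m {{1..m}}) ` pinned_fns Q 1 {1..m}"
proof
  show "coset (ZSig m {{1..m}}) ` pinned_fns Q 1 {1..m} \<subseteq> quot (ZSig m Q) (ZSig m {{1..m}})"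
    unfolding quot_def pinned_fns_def ZSig_def by blast
  show "quot (ZSig m Q) (ZSig m {{1..m}}) \<subseteq> coset (ZSig m {{1..m}}) ` pinned_fns Q 1 {1..m}"
  proof
    fix c assume "c \<in> quot (ZSig m Q) (ZSig m {{1..m}})"
    then obtain j where j: "j \<in> ZSig m Q" "c = coset (ZSig m {{1..m}}) j"
      unfolding quot_def by blast
    define d where "d i = (if i \<in> {1..m} then - j 1 else 0)" for i
    have "d \<in> ZSig m {{1..m}}"
      by (simp add: d_def ZSig_def measurable_wrt_def)
    then have "c = coset (ZSig m {{1..m}}) (\<lambda>i. j i + d i)"
      using j(2) by (simp add: coset_ZSig_eq)
    moreover have "(\<lambda>i. j i + d i) \<in> pinned_fns Q 1 {1..m}"
      unfolding pinned_fns_def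
    proof (intro CollectI conjI allI impI)
      show "j i + d i = 0" if "i \<notin> {1..m}" for i
        using j(1) that unfolding ZSig_def d_def by auto
      show "j 1 + d 1 = 0"
        using assms(1) by (simp add: d_def)
      show "measurable_wrt Q (\<lambda>i. j i + d i)"
        unfolding measurable_wrt_def
      proof (intro ballI)
        fix B x y assume "B \<in> Q" "x \<in> B" "y \<in> B"
        then have "x \<in> {1..m}" "y \<in> {1..m}" "j x = j y"
          using assms(2) j(1) unfolding ZSig_def measurable_wrt_def by blast+
        then show "j x + d x = j y + d y"
          by (simp add: d_def)
      qed
    qed
    ultimately show "c \<in> coset (ZSig m {{1..m}}) ` pinned_fns Q 1 {1..m}"
      by blast
  qed
qed

lemma inj_on_coset_single_block:
  assumes "1 \<le> m"
  shows "inj_on (coset (ZSig m {{1..m}})) (pinned_fns Q 1 {1..m})"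
proof (rule inj_onI)
  fix g1 g2 assume g: "g1 \<in> pinned_fns Q 1 {1..m}" "g2 \<in> pinned_fns Q 1 {1..m}"
    and "coset (ZSig m {{1..m}}) g1 = coset (ZSig m {{1..m}}) g2"
  then have "g1 \<in> coset (ZSig m {{1..m}}) g2"
    using self_in_coset_ZSig by metis
  then obtain h where h: "h \<in> ZSig m {{1..m}}" "g1 = (\<lambda>i. g2 i + h i)"
    by (rule cosetE)
  have "h 1 = 0"
    using g(1,2) fun_cong[OF h(2), of 1] by (simp add: pinned_fns_def)
  have "h i = 0" for i
  proof (cases "i \<in> {1..m}")
    case True
    moreover have "1 \<in> {1..m}"
      using assms by simp
    ultimately have "h i = h 1"
      using h(1) unfolding ZSig_def measurable_wrt_def by blast
    then show ?thesis
      using \<open>h 1 = 0\<close> by simp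
  next
    case False
    then show ?thesis
      using h(1) by (simp add: ZSig_def)
  qed
  then show "g1 = g2"
    using h(2) by simp
qed

lemma shift_invariant_on_quot_single_block:
  fixes f :: "(nat \<Rightarrow> int) \<Rightarrow> 'a"
  assumes "shift_invariant_on {1..m} f"
  shows "\<forall>c\<in>quot (ZSig m Q) (ZSig m {{1..m}}). \<forall>j\<in>c. \<forall>j'\<in>c. f j = f j'"
    and "f (SOME j. j \<in> coset (ZSig m {{1..m}}) g) = f g"
proof -
  have coset_const: "f j = f j'" if "j \<in> coset (ZSig m {{1..m}}) j0" "j' \<in> coset (ZSig m {{1..m}}) j0"
    for j j' j0
    using coset_single_block_shift[OF that] shift_invariant_onD[OF assms] by metis
  then show "\<forall>c\<in>quot (ZSig m Q) (ZSig m {{1..m}}). \<forall>j\<in>c. \<forall>j'\<in>c. f j = f j'"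
    unfolding quot_def by blast
  show "f (SOME j. j \<in> coset (ZSig m {{1..m}}) g) = f g"
    using coset_const someI[of "\<lambda>j. j \<in> coset (ZSig m {{1..m}}) g", OF self_in_coset_ZSig]
      self_in_coset_ZSig by blast
qed

lemma pjoin_card_one:
  assumes "partition_on {1..m} P" "\<And>B. B \<in> Q \<Longrightarrow> B \<subseteq> {1..m}" "1 \<le> m" "card (pjoin m Q P) = 1"
  shows "pjoin m Q P = {{1..m}}" "{1..m} \<subseteq> (same_block P \<union> same_block Q)\<^sup>* `` {1}"
proof -
  define R where "R = same_block Q \<union> same_block P"
  have pjoin: "pjoin m Q P = {1..m} // R\<^sup>*"
    by (simp add: pjoin_def R_def)
  obtain C where C: "pjoin m Q P = {C}"
    using assms(4) card_1_singletonE by blast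
  have eq_class: "R\<^sup>* `` {y} = C" if "y \<in> {1..m}" for y
    using quotientI[OF that, of "R\<^sup>*"] C pjoin by simp
  have "1 \<in> {1..m}"
    using assms(3) by simp
  have connected: "{1..m} \<subseteq> R\<^sup>* `` {1}"
    using eq_class \<open>1 \<in> {1..m}\<close> by blast
  have "y \<in> {1..m}" if "(1, y) \<in> R\<^sup>*" for y
    using that
  proof (induction rule: rtrancl_induct)
    case base
    show ?case by fact
  next
    case (step x y)
    then obtain B where "B \<in> Q \<union> P" "y \<in> B"
      by (auto simp: R_def same_block_def)
    then show ?case
      using assms(2) partition_onD1[OF assms(1)] by blast
  qed
  then have "C = {1..m}"
    using eq_class[OF \<open>1 \<in> {1..m}\<close>] connected by blast
  then show "pjoin m Q P = {{1..m}}"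
    using C by simp
  show "{1..m} \<subseteq> (same_block P \<union> same_block Q)\<^sup>* `` {1}"
    using connected by (simp add: R_def Un_commute)
qed

lemma CPi_average_tendsto_quot_sum:
  assumes "standing_assumptions M Z" "1 \<le> m" "\<And>B. B \<in> Q \<Longrightarrow> B \<subseteq> {1..m}"
    and "partition_on {1..m} P" "\<And>B. B \<in> P \<Longrightarrow> 2 \<le> card B" "card (pjoin m Q P) = 1"
  shows "(\<forall>c\<in>quot (ZSig m Q) (ZSig m (pjoin m Q P)). \<forall>j\<in>c. \<forall>j'\<in>c. CPi M Z P j = CPi M Z P j')
       \<and> ((\<lambda>c. \<bar>CPi M Z P (SOME j. j \<in> c)\<bar>) summable_on quot (ZSig m Q) (ZSig m (pjoin m Q P)))
       \<and> (\<lambda>p. (1 / real p) * (\<Sum>j\<in>{j \<in> words p m. measurable_wrt Q j}. CPi M Z P (\<lambda>i. int (j i))))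
         \<longlonglongrightarrow> (\<Sum>\<^sub>\<infinity>c\<in>quot (ZSig m Q) (ZSig m (pjoin m Q P)). CPi M Z P (SOME j. j \<in> c))"
proof -
  let ?H = "ZSig m {{1..m}}" and ?G = "pinned_fns Q 1 {1..m}"
  have shift: "shift_invariant_on {1..m} (CPi M Z P)"
    using assms(1,4) by (intro shift_invariant_on_CPi) (auto simp: standing_assumptions_def)
  note representative = shift_invariant_on_quot_single_block[OF shift]
  have connected: "{1..m} \<subseteq> (same_block P \<union> same_block Q)\<^sup>* `` {1}"
    by (rule pjoin_card_one(2)[OF assms(4,3,2,6)])
  have summable: "(\<lambda>g. \<bar>CPi M Z P g\<bar>) summable_on ?G"
    using assms(1) finite_atLeastAtMost assms(4,5) connected by (rule CPi_abs_summable_on_pinned)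
  have reindex: "(\<lambda>c. F (CPi M Z P (SOME j. j \<in> c))) \<circ> coset ?H = (\<lambda>g. F (CPi M Z P g))"
    for F :: "real \<Rightarrow> real"
    using representative(2) by (simp add: comp_def)
  have quot: "quot (ZSig m Q) ?H = coset ?H ` ?G"
    by (rule quot_ZSig_single_block[OF assms(2,3)])
  have inj: "inj_on (coset ?H) ?G"
    by (rule inj_on_coset_single_block[OF assms(2)])
  have pjoin: "pjoin m Q P = {{1..m}}"
    by (rule pjoin_card_one(1)[OF assms(4,3,2,6)])
  show ?thesis
    unfolding pjoin
  proof (intro conjI)
    show "\<forall>c\<in>quot (ZSig m Q) ?H. \<forall>j\<in>c. \<forall>j'\<in>c. CPi M Z P j = CPi M Z P j'"
      by (rule representative(1))
    show "(\<lambda>c. \<bar>CPi M Z P (SOME j. j \<in> c)\<bar>) summable_on quot (ZSig m Q) ?H"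
      unfolding quot summable_on_reindex[OF inj] reindex[of abs] by (rule summable)
    show "(\<lambda>p. 1 / real p * (\<Sum>j\<in>{j \<in> words p m. measurable_wrt Q j}. CPi M Z P (\<lambda>i. int (j i))))
        \<longlonglongrightarrow> (\<Sum>\<^sub>\<infinity>c\<in>quot (ZSig m Q) ?H. CPi M Z P (SOME j. j \<in> c))"
      using average_over_words_tendsto[OF assms(2,3) shift summable] reindex[of id]
      unfolding quot infsum_reindex[OF inj] by simp
  qed
qed

lemma Pi1_subset:
  assumes "B \<in> Pi1 r kk" "\<forall>\<alpha>\<in>{1..r}. 1 \<le> kk \<alpha>"
  shows "B \<subseteq> {1..Kidx kk r}"
proof -
  obtain \<alpha> where \<alpha>: "\<alpha> \<in> {1..r}"
    and B: "B \<in> {{Kidx kk (\<alpha> - 1) + 2*\<nu>, Kidx kk (\<alpha> - 1) + 2*\<nu> + 1} | \<nu>. 1 \<le> \<nu> \<and> \<nu> \<le> kk \<alpha> - 1}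
      \<union> {{Kidx kk \<alpha>, Kidx kk (\<alpha> - 1) + 1}}"
    using assms(1) unfolding Pi1_def by blast
  have K\<alpha>: "Kidx kk \<alpha> = Kidx kk (\<alpha> - 1) + 2 * kk \<alpha>"
    using \<alpha> by (cases \<alpha>) (auto simp: Kidx_def)
  have "Kidx kk \<alpha> \<le> Kidx kk r"
    using \<alpha> unfolding Kidx_def by (intro mult_left_mono sum_mono2) auto
  moreover have "1 \<le> kk \<alpha>"
    using assms(2) \<alpha> by blast
  ultimately show ?thesis
    using B K\<alpha> by auto
qed

theorem proposition6p4:
  fixes M :: "'a measure" and Z :: "int \<Rightarrow> 'a \<Rightarrow> real"
    and r k :: nat and kk :: "nat \<Rightarrow> nat" and P :: "nat set set"
  assumes "standing_assumptions M Z"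
    and "1 \<le> r"
    and "\<forall>\<alpha>\<in>{1..r}. 1 \<le> kk \<alpha>"
    and "k = (\<Sum>\<alpha>\<in>{1..r}. kk \<alpha>)"
    and "P \<in> Part2 (2*k)"
    and "card (pjoin (2*k) (pjoin (2*k) (Pi0 k) (Pi1 r kk)) P) = 1"
    and "card (pjoin (2*k) (Pi1 r kk) P) = 1"
  shows "(\<forall>c\<in>quot (ZSig (2*k) (Pi1 r kk)) (ZSig (2*k) (pjoin (2*k) (Pi1 r kk) P)).
            \<forall>j\<in>c. \<forall>j'\<in>c. CPi M Z P j = CPi M Z P j')
       \<and> ((\<lambda>c. \<bar>CPi M Z P (SOME j. j \<in> c)\<bar>) summable_on
            quot (ZSig (2*k) (Pi1 r kk)) (ZSig (2*k) (pjoin (2*k) (Pi1 r kk) P)))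
       \<and> (\<lambda>p. (1 / real p) *
              (\<Sum>j\<in>{j \<in> words p (2*k). measurable_wrt (Pi1 r kk) j}.
                 CPi M Z P (\<lambda>i. int (j i))))
         \<longlonglongrightarrow> (\<Sum>\<^sub>\<infinity>c\<in>quot (ZSig (2*k) (Pi1 r kk)) (ZSig (2*k) (pjoin (2*k) (Pi1 r kk) P)).
                  CPi M Z P (SOME j. j \<in> c))"
proof -
  have "kk 1 \<le> k" "1 \<le> kk 1"
    using assms(2,3,4) by (auto intro: member_le_sum)
  then have "1 \<le> 2 * k"
    by simp
  moreover have "\<And>B. B \<in> Pi1 r kk \<Longrightarrow> B \<subseteq> {1..2*k}"
    using Pi1_subset assms(3) by (simp add: assms(4) Kidx_def)
  moreover have "partition_on {1..2*k} P" "\<And>B. B \<in> P \<Longrightarrow> 2 \<le> card B"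
    using assms(5) by (simp_all add: Part2_def Part_def)
  ultimately show ?thesis
    using assms(1,7) by (intro CPi_average_tendsto_quot_sum)
qed

end
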